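(* Fix an integer $r\ge2$, $\varepsilon,s>0$, $\gamma=(\gamma_1,\dots,\gamma_r)$ with $\gamma_i\in(0,1)$, $\sum_i\gamma_i=1$, $i^\star=\arg\max_i\gamma_i$, and let $\Psi=\left(\frac{\gamma_{i^\star}\log d}{d\,r^{r-1}(r-1)\prod_{i=1}^r\gamma_i}\right)^{1/(r-1)}$. Let $d=d(\varepsilon,s,\gamma,r)$ be sufficiently large, and for each $i\in[r]$ fix $S_i\subseteq V_i$ with $|S_i|\le s\gamma_i r n\Psi$. Then for $p=d/n^{r-1}$, with probability $1-\exp(-\Omega(n))$ there is no independent set $S'$ of $\mathcal{H}(r,n,p)$ satisfying $|S'\cap S_i|\ge\varepsilon\gamma_i r n\Psi$ for every $1\le i\le r$.
   Context: $\mathcal{H}(r,n,p)$: random $r$-uniform $r$-partite hypergraph with vertex set $[n]\times[r]$, parts $V_i=[n]\times\{i\}$, each $e\in V_1\times\cdots\times V_r$ an edge independently with probability $p$. An independent set is a vertex set containing no edge. *)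

theory Defs
  imports "HOL-Probability.Probability"
begin

text \<open>Vertices of H(r,n,p): pairs (v,i) with v < n and i < r (0-indexed version of [n] x [r]).
  Part V_i = {..<n} x {i}.\<close>
definition hg_vertices :: "nat \<Rightarrow> nat \<Rightarrow> (nat \<times> nat) set" where
  "hg_vertices r n = {..<n} \<times> {..<r}"

text \<open>Potential edges: elements of V_1 x ... x V_r, encoded as functions e with e i < n
  (the vertex of the edge in part i is (e i, i)).\<close>
definition hg_edges :: "nat \<Rightarrow> nat \<Rightarrow> (nat \<Rightarrow> nat) set" where
  "hg_edges r n = PiE {..<r} (\<lambda>_. {..<n})"

definition edge_verts :: "nat \<Rightarrow> (nat \<Rightarrow> nat) \<Rightarrow> (nat \<times> nat) set" where
  "edge_verts r e = (\<lambda>i. (e i, i)) ` {..<r}"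

definition hg_pmf :: "nat \<Rightarrow> nat \<Rightarrow> real \<Rightarrow> ((nat \<Rightarrow> nat) \<Rightarrow> bool) pmf" where
  "hg_pmf r n p = Pi_pmf (hg_edges r n) False (\<lambda>_. bernoulli_pmf p)"

definition hg_independent ::
  "nat \<Rightarrow> nat \<Rightarrow> ((nat \<Rightarrow> nat) \<Rightarrow> bool) \<Rightarrow> (nat \<times> nat) set \<Rightarrow> bool" where
  "hg_independent r n H S \<longleftrightarrow>
     S \<subseteq> hg_vertices r n \<and> (\<forall>e\<in>hg_edges r n. H e \<longrightarrow> \<not> edge_verts r e \<subseteq> S)"

definition Psi :: "nat \<Rightarrow> (nat \<Rightarrow> real) \<Rightarrow> real \<Rightarrow> real" where
  "Psi r \<gamma> d = (Max (\<gamma> ` {..<r}) * ln d /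
      (d * real r ^ (r - 1) * (real r - 1) * (\<Prod>i<r. \<gamma> i))) powr (1 / (real r - 1))"

end

theory Submission
  imports Defs
begin

text \<open>An independent set meeting every \<open>S i\<close> in at least \<open>t i\<close> vertices contains a subset
  \<open>A\<close> of \<open>\<Union>i. S i\<close> with the same property, and then all \<open>\<Prod>i. |A \<inter> S i| \<ge> \<Prod>i. t i\<close> edges of
  the box spanned by \<open>A\<close> are absent, which has probability at most \<open>exp (-p \<Prod>i. t i)\<close>.
  A union bound over the at most \<open>2^|\<Union>i. S i|\<close> candidates \<open>A\<close> gives the estimate. With
  \<open>t i = \<epsilon> \<gamma>\<^sub>i r n \<Psi>\<close> and \<open>p = d/n^(r-1)\<close> the exponent is \<open>n r \<Psi> \<epsilon>^r \<gamma>\<^sub>i\<^sub>\<star> log d / (r-1)\<close>, by the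
  choice of \<open>\<Psi>\<close>, while the number of candidates is only \<open>2^(s r n \<Psi>)\<close>; for large \<open>d\<close> the
  \<open>log d\<close> factor wins.\<close>

lemma prob_hg_pmf_no_edges:
  assumes "E \<subseteq> hg_edges r n" "0 \<le> p" "p \<le> 1"
  shows "measure_pmf.prob (hg_pmf r n p) {H. \<forall>e\<in>E. \<not> H e} = (1 - p) ^ card E"
proof -
  have fin: "finite (hg_edges r n)" by (simp add: hg_edges_def finite_PiE)
  have eq: "{H. \<forall>e\<in>E. \<not> H e} = Pi (hg_edges r n) (\<lambda>e. if e \<in> E then {False} else UNIV)"
    using assms(1) by (auto simp: Pi_def)
  have "measure_pmf.prob (hg_pmf r n p) {H. \<forall>e\<in>E. \<not> H e}
     = (\<Prod>e\<in>hg_edges r n. measure_pmf.prob (bernoulli_pmf p) (if e \<in> E then {False} else UNIV))"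
    unfolding eq hg_pmf_def by (simp add: measure_Pi_pmf_Pi fin)
  also have "\<dots> = (\<Prod>e\<in>hg_edges r n. if e \<in> E then 1 - p else 1)"
    by (intro prod.cong) (auto simp: measure_pmf_single assms)
  also have "\<dots> = (1 - p) ^ card E"
    using assms(1) fin by (simp add: prod.If_cases Int_absorb1 Int_absorb2)
  finally show ?thesis .
qed

lemma prob_hg_pmf_no_edges_le_exp:
  assumes "E \<subseteq> hg_edges r n" "0 \<le> p" "p \<le> 1"
  shows "measure_pmf.prob (hg_pmf r n p) {H. \<forall>e\<in>E. \<not> H e} \<le> exp (- p * card E)"
proof -
  have "(1 - p) ^ card E \<le> exp (- p) ^ card E"
    using assms(3) by (intro power_mono) (use exp_ge_add_one_self[of "- p"] in auto)
  then show ?thesis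
    by (simp add: prob_hg_pmf_no_edges[OF assms] exp_of_nat_mult[symmetric] mult.commute)
qed

definition edges_within :: "nat \<Rightarrow> (nat \<times> nat) set \<Rightarrow> (nat \<Rightarrow> nat) set" where
  "edges_within r A = PiE {..<r} (\<lambda>i. {v. (v, i) \<in> A})"

lemma edges_within_subset_hg_edges:
  "A \<subseteq> hg_vertices r n \<Longrightarrow> edges_within r A \<subseteq> hg_edges r n"
  unfolding edges_within_def hg_edges_def hg_vertices_def by (auto simp: PiE_def Pi_def)

lemma edge_verts_subset_if_edges_within:
  "e \<in> edges_within r A \<Longrightarrow> edge_verts r e \<subseteq> A"
  unfolding edges_within_def edge_verts_def by (auto simp: PiE_def Pi_def)

lemma card_edges_within:
  "card (edges_within r A) = (\<Prod>i<r. card (A \<inter> UNIV \<times> {i}))"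
proof -
  have "card {v. (v, i) \<in> A} = card (A \<inter> UNIV \<times> {i})" for i
    by (rule bij_betw_same_card[of "\<lambda>v. (v, i)"]) (auto simp: bij_betw_def inj_on_def)
  then show ?thesis
    unfolding edges_within_def by (simp add: card_PiE)
qed

lemma hg_independent_subset:
  "hg_independent r n H S \<Longrightarrow> A \<subseteq> S \<Longrightarrow> hg_independent r n H A"
  unfolding hg_independent_def by blast

lemma hg_independent_no_edges_within:
  "hg_independent r n H A \<Longrightarrow> e \<in> edges_within r A \<Longrightarrow> \<not> H e"
  using edges_within_subset_hg_edges edge_verts_subset_if_edges_within
  unfolding hg_independent_def by blast

lemma prob_independent_set_meeting_parts:
  fixes S :: "nat \<Rightarrow> (nat \<times> nat) set" and t :: "nat \<Rightarrow> real"
  assumes parts: "\<forall>i<r. S i \<subseteq> {..<n} \<times> {i}" and p: "0 \<le> p" "p \<le> 1"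
    and t: "\<forall>i<r. 0 \<le> t i"
  shows "measure_pmf.prob (hg_pmf r n p)
           {H. \<exists>S'. hg_independent r n H S' \<and> (\<forall>i<r. t i \<le> card (S' \<inter> S i))}
         \<le> 2 ^ card (\<Union>i<r. S i) * exp (- p * (\<Prod>i<r. t i))"
proof -
  define U where "U = (\<Union>i<r. S i)"
  define G where "G = {A. A \<subseteq> U \<and> (\<forall>i<r. t i \<le> card (A \<inter> S i))}"
  define no_box where "no_box A = {H. \<forall>e\<in>edges_within r A. \<not> H e}" for A
  have U_vertices: "U \<subseteq> hg_vertices r n"
    using parts unfolding U_def hg_vertices_def by auto
  have finU: "finite U"
    using U_vertices finite_subset unfolding hg_vertices_def by blast
  have finG: "finite G" and cardG: "card G \<le> card (Pow U)"
    unfolding G_def using finU by (auto intro: finite_subset[of _ "Pow U"] card_mono)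
  have covered: "{H. \<exists>S'. hg_independent r n H S' \<and> (\<forall>i<r. t i \<le> card (S' \<inter> S i))}
                  \<subseteq> (\<Union>A\<in>G. no_box A)"
  proof safe
    fix H S' assume ind: "hg_independent r n H S'" and big: "\<forall>i<r. t i \<le> card (S' \<inter> S i)"
    have "U \<inter> S i = S i" if "i < r" for i
      using that unfolding U_def by blast
    then have "S' \<inter> U \<in> G"
      using big unfolding G_def by (simp add: Int_assoc)
    moreover have "H \<in> no_box (S' \<inter> U)"
      using hg_independent_no_edges_within[OF hg_independent_subset[OF ind]]
      unfolding no_box_def by blast
    ultimately show "H \<in> (\<Union>A\<in>G. no_box A)" by blast
  qed
  have each: "measure_pmf.prob (hg_pmf r n p) (no_box A) \<le> exp (- p * (\<Prod>i<r. t i))"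
    if "A \<in> G" for A
  proof -
    have AU: "A \<subseteq> U" and big: "\<forall>i<r. t i \<le> card (A \<inter> S i)"
      using that unfolding G_def by auto
    have "A \<inter> UNIV \<times> {i} = A \<inter> S i" if "i < r" for i
      using AU parts that unfolding U_def by blast
    then have "real (card (edges_within r A)) = (\<Prod>i<r. real (card (A \<inter> S i)))"
      by (simp add: card_edges_within)
    moreover have "(\<Prod>i<r. t i) \<le> (\<Prod>i<r. real (card (A \<inter> S i)))"
      using big t by (intro prod_mono) auto
    ultimately have "p * (\<Prod>i<r. t i) \<le> p * card (edges_within r A)"
      using p(1) by (simp add: mult_left_mono)
    then have "exp (- p * card (edges_within r A)) \<le> exp (- p * (\<Prod>i<r. t i))"
      by simp
    moreover have "A \<subseteq> hg_vertices r n"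
      using AU U_vertices by blast
    ultimately show ?thesis
      using prob_hg_pmf_no_edges_le_exp[OF edges_within_subset_hg_edges p]
      unfolding no_box_def by (meson order_trans)
  qed
  have "measure_pmf.prob (hg_pmf r n p)
          {H. \<exists>S'. hg_independent r n H S' \<and> (\<forall>i<r. t i \<le> card (S' \<inter> S i))}
        \<le> measure_pmf.prob (hg_pmf r n p) (\<Union>A\<in>G. no_box A)"
    by (rule measure_pmf.finite_measure_mono[OF covered]) simp
  also have "\<dots> \<le> (\<Sum>A\<in>G. measure_pmf.prob (hg_pmf r n p) (no_box A))"
    by (rule measure_pmf.finite_measure_subadditive_finite[OF finG]) auto
  also have "\<dots> \<le> card G * exp (- p * (\<Prod>i<r. t i))"
    using sum_mono[of G _ "\<lambda>_. exp (- p * (\<Prod>i<r. t i))", OF each] by simp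
  also have "\<dots> \<le> 2 ^ card U * exp (- p * (\<Prod>i<r. t i))"
    using cardG finU by (simp add: card_Pow flip: of_nat_le_iff)
  finally show ?thesis unfolding U_def .
qed

lemma card_UN_le_weighted:
  fixes w :: "nat \<Rightarrow> real"
  assumes "\<forall>i<r. real (card (S i)) \<le> w i * B" and "(\<Sum>i<r. w i) = 1"
  shows "real (card (\<Union>i<r. S i)) \<le> B"
proof -
  have "real (card (\<Union>i<r. S i)) \<le> (\<Sum>i<r. real (card (S i)))"
    using card_UN_le[of "{..<r}" S] by (simp flip: of_nat_sum)
  also have "\<dots> \<le> (\<Sum>i<r. w i * B)"
    using assms(1) by (intro sum_mono) auto
  finally show ?thesis
    by (simp add: assms(2) flip: sum_distrib_right)
qed

lemma powr_inverse_power: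
  fixes x :: real
  assumes "0 < x" "0 < m"
  shows "(x powr (1 / real m)) ^ m = x"
  using assms by (simp add: powr_realpow[symmetric] powr_powr)

lemma power2_le_exp_ln2:
  assumes "real k \<le> b"
  shows "(2::real) ^ k \<le> exp (ln 2 * b)"
proof -
  have "(2::real) ^ k = exp (real k * ln 2)"
    by (simp add: exp_of_nat_mult)
  then show ?thesis
    using assms by (simp add: mult.commute)
qed

lemma Max_image_pos:
  fixes f :: "'a \<Rightarrow> 'b :: {linorder, zero}"
  assumes "finite A" "A \<noteq> {}" "\<forall>x\<in>A. 0 < f x"
  shows "0 < Max (f ` A)"
proof -
  have "Max (f ` A) \<in> f ` A"
    using assms(1,2) by (intro Max_in) auto
  then show ?thesis
    using assms(3) by auto
qed

lemma Psi_base_pos: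
  assumes "r \<ge> 2" "\<forall>i<r. 0 < \<gamma> i" "1 < d"
  shows "0 < Max (\<gamma> ` {..<r}) * ln d / (d * real r ^ (r - 1) * (real r - 1) * (\<Prod>i<r. \<gamma> i))"
proof -
  have "0 < Max (\<gamma> ` {..<r})"
    using assms(1,2) by (intro Max_image_pos) (auto simp: lessThan_empty_iff)
  moreover have "0 < (\<Prod>i<r. \<gamma> i)"
    using assms(2) by (intro prod_pos) auto
  ultimately show ?thesis
    using assms(1,3) by (intro divide_pos_pos mult_pos_pos) auto
qed

lemma Psi_pos:
  assumes "r \<ge> 2" "\<forall>i<r. 0 < \<gamma> i" "1 < d"
  shows "0 < Psi r \<gamma> d"
  using Psi_base_pos[OF assms] unfolding Psi_def by (subst powr_gt_zero) linarith

lemma Psi_power: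
  assumes "r \<ge> 2" "\<forall>i<r. 0 < \<gamma> i" "1 < d"
  shows "Psi r \<gamma> d ^ (r - 1)
           = Max (\<gamma> ` {..<r}) * ln d / (d * real r ^ (r - 1) * (real r - 1) * (\<Prod>i<r. \<gamma> i))"
proof -
  have "real r - 1 = real (r - 1)" and "0 < r - 1"
    using assms(1) by auto
  then show ?thesis
    using Psi_base_pos[OF assms] unfolding Psi_def
    by (simp only: powr_inverse_power)
qed

lemma Psi_threshold_product:
  fixes \<epsilon> :: real
  assumes "r \<ge> 2" "\<forall>i<r. 0 < \<gamma> i" "1 < d" "0 < n"
  shows "d / real n ^ (r - 1) * (\<Prod>i<r. \<epsilon> * \<gamma> i * real r * real n * Psi r \<gamma> d)
           = real n * (real r * Psi r \<gamma> d *
               (\<epsilon> ^ r * Max (\<gamma> ` {..<r}) * ln d / (real r - 1)))"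
proof -
  obtain m where r: "r = Suc m" and m: "0 < m"
    using assms(1) by (cases r) auto
  define \<Psi> where "\<Psi> = Psi r \<gamma> d"
  define P where "P = (\<Prod>i<r. \<gamma> i)"
  define G where "G = Max (\<gamma> ` {..<r})"
  have \<Psi>_pow: "\<Psi> ^ m = G * ln d / (d * real r ^ m * real m * P)"
    using Psi_power[OF assms(1-3)] unfolding \<Psi>_def G_def P_def r by simp
  have "0 < P"
    using assms(2) unfolding P_def by (intro prod_pos) auto
  have "(\<Prod>i<r. \<epsilon> * \<gamma> i * real r * real n * \<Psi>) = P * (\<epsilon> * real r * real n * \<Psi>) ^ r"
    unfolding P_def by (simp add: prod.distrib power_mult_distrib)
  also have "\<dots> = P * (\<epsilon> * real r * real n * \<Psi>) * \<epsilon> ^ m * real r ^ m * real n ^ m * \<Psi> ^ m"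
    unfolding r by (simp add: power_mult_distrib ac_simps)
  finally have "(\<Prod>i<r. \<epsilon> * \<gamma> i * real r * real n * \<Psi>)
                  = P * (\<epsilon> * real r * real n * \<Psi>) * \<epsilon> ^ m * real r ^ m * real n ^ m * \<Psi> ^ m" .
  moreover have "r - 1 = m" "real r - 1 = real m" "\<epsilon> ^ r = \<epsilon> * \<epsilon> ^ m"
    by (simp_all add: r)
  ultimately show ?thesis
    unfolding \<Psi>_def[symmetric] G_def[symmetric] \<Psi>_pow using \<open>0 < P\<close> assms(3,4) m
    by (simp add: field_simps)
qed

definition Psi_rate :: "nat \<Rightarrow> real \<Rightarrow> real \<Rightarrow> (nat \<Rightarrow> real) \<Rightarrow> real \<Rightarrow> real" where
  "Psi_rate r \<epsilon> s \<gamma> d =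
     real r * Psi r \<gamma> d * (\<epsilon> ^ r * Max (\<gamma> ` {..<r}) * ln d / (real r - 1) - s * ln 2)"

lemma prob_independent_set_Psi_thresholds:
  fixes \<epsilon> s :: real and \<gamma> :: "nat \<Rightarrow> real" and S :: "nat \<Rightarrow> (nat \<times> nat) set"
  assumes r: "r \<ge> 2" and "0 < \<epsilon>" and \<gamma>: "\<forall>i<r. 0 < \<gamma> i" "(\<Sum>i<r. \<gamma> i) = 1"
    and d: "1 < d" "d \<le> real n"
    and S: "\<forall>i<r. S i \<subseteq> {..<n} \<times> {i} \<and>
              real (card (S i)) \<le> s * \<gamma> i * real r * real n * Psi r \<gamma> d"
  shows "measure_pmf.prob (hg_pmf r n (d / real n ^ (r - 1)))
           {H. \<exists>S'. hg_independent r n H S' \<and>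
              (\<forall>i<r. real (card (S' \<inter> S i)) \<ge> \<epsilon> * \<gamma> i * real r * real n * Psi r \<gamma> d)}
         \<le> exp (- Psi_rate r \<epsilon> s \<gamma> d * real n)"
proof -
  define p where "p = d / real n ^ (r - 1)"
  define t where "t i = \<epsilon> * \<gamma> i * real r * real n * Psi r \<gamma> d" for i
  have "0 < n"
    using d by simp
  then have "real n \<le> real n ^ (r - 1)"
    using power_increasing[of 1 "r - 1" "real n"] r by simp
  then have "d \<le> real n ^ (r - 1)"
    using d(2) by linarith
  then have p: "0 \<le> p" "p \<le> 1"
    unfolding p_def using d(1) by (auto simp: divide_le_eq_1)
  have parts: "\<forall>i<r. S i \<subseteq> {..<n} \<times> {i}"
    using S by blast
  have t_nonneg: "\<forall>i<r. 0 \<le> t i"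
    using Psi_pos[OF r \<gamma>(1) d(1)] \<open>0 < \<epsilon>\<close> \<gamma>(1) unfolding t_def by (simp add: less_imp_le)
  have card_U: "real (card (\<Union>i<r. S i)) \<le> s * real r * real n * Psi r \<gamma> d"
    using S \<gamma>(2) by (intro card_UN_le_weighted[where w = \<gamma>]) (auto simp: ac_simps)
  have "measure_pmf.prob (hg_pmf r n p)
          {H. \<exists>S'. hg_independent r n H S' \<and> (\<forall>i<r. t i \<le> card (S' \<inter> S i))}
        \<le> 2 ^ card (\<Union>i<r. S i) * exp (- p * (\<Prod>i<r. t i))"
    by (rule prob_independent_set_meeting_parts[OF parts p t_nonneg])
  also have "\<dots> \<le> exp (ln 2 * (s * real r * real n * Psi r \<gamma> d)) *
                  exp (- (real n * (real r * Psi r \<gamma> d *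
                                   (\<epsilon> ^ r * Max (\<gamma> ` {..<r}) * ln d / (real r - 1)))))"
    using power2_le_exp_ln2[OF card_U] Psi_threshold_product[OF r \<gamma>(1) d(1) \<open>0 < n\<close>, of \<epsilon>]
    unfolding p_def t_def by simp
  also have "\<dots> = exp (- Psi_rate r \<epsilon> s \<gamma> d * real n)"
    by (simp add: Psi_rate_def exp_add[symmetric] algebra_simps)
  finally show ?thesis
    unfolding p_def t_def .
qed

lemma Psi_rate_eventually_pos:
  fixes \<gamma> :: "nat \<Rightarrow> real"
  assumes r: "r \<ge> 2" and "0 < \<epsilon>" and \<gamma>: "\<forall>i<r. 0 < \<gamma> i"
  shows "\<exists>d0. \<forall>d\<ge>d0. 1 < d \<and> 0 < Psi_rate r \<epsilon> s \<gamma> d"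
proof (intro exI allI impI)
  define L where "L = \<bar>s\<bar> * ln 2 * (real r - 1) / (\<epsilon> ^ r * Max (\<gamma> ` {..<r}))"
  have pos: "0 < \<epsilon> ^ r * Max (\<gamma> ` {..<r})"
    using Max_image_pos[of "{..<r}" \<gamma>] \<gamma> r \<open>0 < \<epsilon>\<close> by (simp add: lessThan_empty_iff)
  then have "0 \<le> L"
    using r unfolding L_def by simp
  fix d :: real
  assume "exp (L + 1) \<le> d"
  moreover have "1 < exp (L + 1)"
    using \<open>0 \<le> L\<close> by simp
  ultimately have d: "1 < d"
    by linarith
  then have "L < ln d"
    using ln_ge_iff[of d "L + 1"] \<open>exp (L + 1) \<le> d\<close> by simp
  then have "\<bar>s\<bar> * ln 2 < \<epsilon> ^ r * Max (\<gamma> ` {..<r}) * ln d / (real r - 1)"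
    using pos r unfolding L_def by (simp add: field_simps)
  moreover have "s * ln 2 \<le> \<bar>s\<bar> * ln 2"
    by (simp add: mult_right_mono)
  ultimately have "s * ln 2 < \<epsilon> ^ r * Max (\<gamma> ` {..<r}) * ln d / (real r - 1)"
    by linarith
  then show "1 < d \<and> 0 < Psi_rate r \<epsilon> s \<gamma> d"
    using Psi_pos[OF r \<gamma> d] r d unfolding Psi_rate_def by simp
qed

theorem mainTheorem19:
  fixes r :: nat and \<epsilon> s :: real and \<gamma> :: "nat \<Rightarrow> real"
  assumes "r \<ge> 2" and "\<epsilon> > 0" and "s > 0"
    and "\<forall>i<r. 0 < \<gamma> i \<and> \<gamma> i < 1"
    and "(\<Sum>i<r. \<gamma> i) = 1"
  shows "\<exists>d0. \<forall>d\<ge>d0. \<exists>c>0. \<exists>N. \<forall>n\<ge>N. \<forall>S :: nat \<Rightarrow> (nat \<times> nat) set.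
    (\<forall>i<r. S i \<subseteq> {..<n} \<times> {i} \<and>
       real (card (S i)) \<le> s * \<gamma> i * real r * real n * Psi r \<gamma> d) \<longrightarrow>
    measure_pmf.prob (hg_pmf r n (d / real n ^ (r - 1)))
      {H. \<exists>S'. hg_independent r n H S' \<and>
         (\<forall>i<r. real (card (S' \<inter> S i)) \<ge> \<epsilon> * \<gamma> i * real r * real n * Psi r \<gamma> d)}
    \<le> exp (- c * real n)"
proof -
  have \<gamma>_pos: "\<forall>i<r. 0 < \<gamma> i"
    using assms(4) by blast
  obtain d0 where d0: "\<forall>d\<ge>d0. 1 < d \<and> 0 < Psi_rate r \<epsilon> s \<gamma> d"
    using Psi_rate_eventually_pos[OF assms(1,2) \<gamma>_pos] by blast
  have n_ge_d: "d \<le> real n" if "nat \<lceil>d\<rceil> \<le> n" for d :: real and n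
    using that of_nat_ceiling[of d] by linarith
  show ?thesis
    using d0 n_ge_d prob_independent_set_Psi_thresholds[OF assms(1,2) \<gamma>_pos assms(5)]
    by blast
qed

end
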